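(* Let $n\ge1$, $C\in\mathcal C_n$ and $A=\Xi^{-1}(C)$. For $i,j\in[n]$ put $m_{ij}=\min(i,j,n-i+1,n-j+1)$. Then for all $i,j,k\in[n]$, $$1-m_{ij}\le \sum_{x=1}^k A_{i,j,x}\le m_{ij},\qquad 1-m_{ij}\le \sum_{x=1}^k A_{i,x,j}\le m_{ij},\qquad 1-m_{ij}\le \sum_{x=1}^k A_{x,i,j}\le m_{ij}.$$
   Context: Let $[n]=\{1,\dots,n\}$, $[0,n]=\{0,\dots,n\}$. A corner-sum hypermatrix of order $n$ is an integer array $C=(C_{i,j,k})_{i,j,k\in[0,n]}$ such that for all $i,j\in[0,n]$: $C_{i,j,0}=C_{i,0,j}=C_{0,i,j}=0$, $C_{i,j,n}=C_{i,n,j}=C_{n,i,j}=ij$, and for all $k\in[n]$ each of $C_{i,j,k}-C_{i,j,k-1}$, $C_{i,k,j}-C_{i,k-1,j}$, $C_{k,i,j}-C_{k-1,i,j}$ is an integer in $\{\max(0,i+j-n),\dots,\min(i,j)\}$; $\mathcal C_n$ is the set of these. $\Xi^{-1}(C)$ is the array indexed by $[n]^3$ with $\Xi^{-1}(C)_{i,j,k}=C_{i,j,k}-C_{i-1,j,k}-C_{i,j-1,k}-C_{i,j,k-1}+C_{i-1,j-1,k}+C_{i-1,j,k-1}+C_{i,j-1,k-1}-C_{i-1,j-1,k-1}$. *)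

theory Defs
  imports Main
begin

text \<open>Corner-sum hypermatrices of order n, indexed by [0,n]^3 (values outside are irrelevant).\<close>

definition step_ok :: "nat \<Rightarrow> nat \<Rightarrow> nat \<Rightarrow> int \<Rightarrow> bool" where
  "step_ok n i j d \<longleftrightarrow> max 0 (int i + int j - int n) \<le> d \<and> d \<le> int (min i j)"

definition corner_sum :: "nat \<Rightarrow> (nat \<Rightarrow> nat \<Rightarrow> nat \<Rightarrow> int) \<Rightarrow> bool" where
  "corner_sum n C \<longleftrightarrow>
     (\<forall>i\<le>n. \<forall>j\<le>n.
        C i j 0 = 0 \<and> C i 0 j = 0 \<and> C 0 i j = 0 \<and>
        C i j n = int (i * j) \<and> C i n j = int (i * j) \<and> C n i j = int (i * j) \<and>
        (\<forall>k\<in>{1..n}.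
           step_ok n i j (C i j k - C i j (k - 1)) \<and>
           step_ok n i j (C i k j - C i (k - 1) j) \<and>
           step_ok n i j (C k i j - C (k - 1) i j)))"

definition Xi_inv :: "(nat \<Rightarrow> nat \<Rightarrow> nat \<Rightarrow> int) \<Rightarrow> nat \<Rightarrow> nat \<Rightarrow> nat \<Rightarrow> int" where
  "Xi_inv C i j k =
     C i j k - C (i-1) j k - C i (j-1) k - C i j (k-1)
     + C (i-1) (j-1) k + C (i-1) j (k-1) + C i (j-1) (k-1) - C (i-1) (j-1) (k-1)"

definition mval :: "nat \<Rightarrow> nat \<Rightarrow> nat \<Rightarrow> int" where
  "mval n i j = int (min (min i j) (min (n - i + 1) (n - j + 1)))"

end

theory Submission
  imports Defs
begin

text \<open>Summing \<open>\<Xi>\<^sup>-\<^sup>1(C)\<close> along a line telescopes to a mixed second difference of \<open>C\<close>, which is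
  the difference of two consecutive unit steps of \<open>C\<close> in another direction. The constraints on
  these steps squeeze the difference into \<open>[1 - e, e]\<close>, where \<open>e = min p (n - p + 1)\<close> is the
  distance of the step position \<open>p\<close> to the boundary; choosing either of the two transverse
  directions gives \<open>p = i\<close> or \<open>p = j\<close>, hence the bound \<open>m\<^sub>i\<^sub>j\<close>. Corner-sum hypermatrices and
  \<open>\<Xi>\<^sup>-\<^sup>1\<close> are invariant under permuting the coordinates, so one line direction suffices.\<close>

definition edge_dist :: "nat \<Rightarrow> nat \<Rightarrow> nat" where
  "edge_dist n p = min p (n - p + 1)"

lemma mval_eq_min_edge_dist: "mval n i j = int (min (edge_dist n i) (edge_dist n j))"
  unfolding mval_def edge_dist_def by (simp add: ac_simps)

lemma step_ok_commute: "step_ok n i j d = step_ok n j i d"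
  unfolding step_ok_def by (simp add: ac_simps)

lemma step_ok_diff_bounds:
  assumes "p \<in> {1..n}" and "step_ok n p k a" and "step_ok n (p - 1) k b"
  shows "1 - int (edge_dist n p) \<le> a - b \<and> a - b \<le> int (edge_dist n p)"
  using assms unfolding step_ok_def edge_dist_def by (auto simp: max_def min_def split: if_splits)

lemma corner_sum_swap12:
  assumes C: "corner_sum n C"
  shows "corner_sum n (\<lambda>a b c. C b a c)"
  unfolding corner_sum_def
  apply (intro allI impI)
  subgoal for i j
    using C[unfolded corner_sum_def, rule_format, of i j] C[unfolded corner_sum_def, rule_format, of j i]
    by (auto simp: step_ok_commute mult.commute)
  done

lemma corner_sum_swap23:
  assumes C: "corner_sum n C"
  shows "corner_sum n (\<lambda>a b c. C a c b)"
  unfolding corner_sum_def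
  apply (intro allI impI)
  subgoal for i j
    using C[unfolded corner_sum_def, rule_format, of i j] C[unfolded corner_sum_def, rule_format, of j i]
    by (auto simp: step_ok_commute mult.commute)
  done

text \<open>As simplification rules these loop (every \<open>C\<close> matches the left-hand sides), so they are
  only used instantiated.\<close>

lemma Xi_inv_swap12: "Xi_inv (\<lambda>a b c. C b a c) i j k = Xi_inv C j i k"
  unfolding Xi_inv_def by simp

lemma Xi_inv_swap23: "Xi_inv (\<lambda>a b c. C a c b) i j k = Xi_inv C i k j"
  unfolding Xi_inv_def by simp

lemma Xi_inv_rotate: "Xi_inv (\<lambda>a b c. C c a b) i j k = Xi_inv C k i j"
  unfolding Xi_inv_def by simp

lemma corner_sum_line_sum_edge_dist_bounds:
  assumes C: "corner_sum n C" and i: "i \<in> {1..n}" and j: "j \<in> {1..n}" and k: "k \<le> n"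
  shows "1 - int (edge_dist n i) \<le> (\<Sum>x=1..k. Xi_inv C i j x)
    \<and> (\<Sum>x=1..k. Xi_inv C i j x) \<le> int (edge_dist n i)"
proof -
  have C0: "C p q 0 = 0" if "p \<le> n" "q \<le> n" for p q
    using C that unfolding corner_sum_def by blast
  define F where "F x = C i j x - C (i - 1) j x - C i (j - 1) x + C (i - 1) (j - 1) x" for x
  define D where "D p = C p j k - C p (j - 1) k" for p
  have "(\<Sum>x=1..k. Xi_inv C i j x) = (\<Sum>x=Suc 0..k. F x - F (x - 1))"
    by (simp add: F_def Xi_inv_def algebra_simps)
  also have "\<dots> = F k - F 0"
    by (rule sum_telescope'') simp
  also have "\<dots> = D i - D (i - 1)"
    using i j by (auto simp: F_def D_def C0)
  finally have sum_eq: "(\<Sum>x=1..k. Xi_inv C i j x) = D i - D (i - 1)" .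
  have "step_ok n i k (D i)" and "step_ok n (i - 1) k (D (i - 1))"
    using C i j k unfolding D_def corner_sum_def by auto
  then show ?thesis
    unfolding sum_eq by (rule step_ok_diff_bounds[OF i])
qed

lemma corner_sum_line_sum_bounds:
  assumes C: "corner_sum n C" and "i \<in> {1..n}" "j \<in> {1..n}" "k \<le> n"
  shows "1 - mval n i j \<le> (\<Sum>x=1..k. Xi_inv C i j x) \<and> (\<Sum>x=1..k. Xi_inv C i j x) \<le> mval n i j"
proof -
  have "1 - int (edge_dist n i) \<le> (\<Sum>x=1..k. Xi_inv C i j x)
      \<and> (\<Sum>x=1..k. Xi_inv C i j x) \<le> int (edge_dist n i)"
    by (rule corner_sum_line_sum_edge_dist_bounds[OF C assms(2-4)])
  moreover have "1 - int (edge_dist n j) \<le> (\<Sum>x=1..k. Xi_inv C i j x)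
      \<and> (\<Sum>x=1..k. Xi_inv C i j x) \<le> int (edge_dist n j)"
    using corner_sum_line_sum_edge_dist_bounds[OF corner_sum_swap12[OF C] assms(3,2,4)]
    unfolding Xi_inv_swap12[of C] .
  ultimately show ?thesis
    unfolding mval_eq_min_edge_dist by (simp add: min_def)
qed

theorem mainTheorem17:
  fixes n :: nat and C :: "nat \<Rightarrow> nat \<Rightarrow> nat \<Rightarrow> int"
  assumes "n \<ge> 1" and "corner_sum n C"
  shows "\<forall>i\<in>{1..n}. \<forall>j\<in>{1..n}. \<forall>k\<in>{1..n}.
    1 - mval n i j \<le> (\<Sum>x=1..k. Xi_inv C i j x) \<and> (\<Sum>x=1..k. Xi_inv C i j x) \<le> mval n i j \<and>
    1 - mval n i j \<le> (\<Sum>x=1..k. Xi_inv C i x j) \<and> (\<Sum>x=1..k. Xi_inv C i x j) \<le> mval n i j \<and>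
    1 - mval n i j \<le> (\<Sum>x=1..k. Xi_inv C x i j) \<and> (\<Sum>x=1..k. Xi_inv C x i j) \<le> mval n i j"
proof -
  note C = \<open>corner_sum n C\<close>
  have C23: "corner_sum n (\<lambda>a b c. C a c b)"
    using corner_sum_swap23[OF C] .
  have C312: "corner_sum n (\<lambda>a b c. C c a b)"
    using corner_sum_swap23[OF corner_sum_swap12[OF C]] by simp
  show ?thesis
    using corner_sum_line_sum_bounds[OF C]
      corner_sum_line_sum_bounds[OF C23, unfolded Xi_inv_swap23[of C]]
      corner_sum_line_sum_bounds[OF C312, unfolded Xi_inv_rotate[of C]]
    by simp
qed

end
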